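(* Let $\Phi=(V,Q,\mathcal{C})$ be a CSP formula with atomic constraints and $h$ a projection scheme satisfying the entropy criterion with parameters $0<\beta<\alpha<1$. Let $q_v=|Q_v|$, $p=\max_{c\in\mathcal{C}}\prod_{v\in\mathrm{vbl}(c)}\frac1{q_v}$, and let $D$ be the maximum degree of the dependency graph of $\Phi$. If $\log\frac1p\ge\frac1\beta\log(2\mathrm{e}D)$, then the Glauber dynamics on $\nu$ is irreducible, aperiodic and reversible with respect to $\nu$, and hence has the unique stationary distribution $\nu$.
   Context: A CSP formula: variables $V$ with finite domains $Q_v$ ($|Q_v|\ge2$), constraints $c$ on $\mathrm{vbl}(c)\subseteq V$; atomic means violated by exactly one configuration of its variables. Dependency graph: vertices $\mathcal{C}$, adjacency iff variable sets intersect. $\mu$: uniform distribution over satisfying assignments. Projection scheme: $h_v:Q_v\to\Sigma_v$, $s_v=|\Sigma_v|$, $\Sigma=\bigotimes_v\Sigma_v$. Entropy criterion with $(\alpha,\beta)$: $\lfloor q_v/s_v\rfloor\le|h_v^{-1}(y)|\le\lceil q_v/s_v\rceil$ for all $v,y$; and for each $c$: $\sum_{v\in\mathrm{vbl}(c)}\log\lceil q_v/s_v\rceil\le\alpha\sum_{v\in\mathrm{vbl}(c)}\log q_v$, $\sum_{v\in\mathrm{vbl}(c)}\log\lfloor q_v/s_v\rfloor\ge\beta\sum_{v\in\mathrm{vbl}(c)}\log q_v$. $\nu$ is the distribution of $(h_v(X_v))_v$ for $X\sim\mu$. Glauber dynamics on $\nu$: pick $v\in V$ uniformly and resample $Y_v$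 from the marginal of $\nu$ at $v$ conditioned on $Y_{V\setminus\{v\}}$. $\log$ base 2. *)

theory Defs
  imports "HOL-Library.FuncSet"  Complex_Main
begin

text \<open>A CSP formula: variables V (of type 'v), finite domains Q v (values of type 'a),
 constraints indexed by the set C (of type 'c); constraint c has scope vbl c and
 is satisfied by a configuration sigma of its variables iff sat c sigma.\<close>

definition csp_formula ::
  "'v set \<Rightarrow> ('v \<Rightarrow> 'a set) \<Rightarrow> 'c set \<Rightarrow> ('c \<Rightarrow> 'v set) \<Rightarrow> bool" where
  "csp_formula V Q C vbl \<longleftrightarrow>
     finite V \<and> V \<noteq> {} \<and> finite C \<and>
     (\<forall>v\<in>V. finite (Q v) \<and> card (Q v) \<ge> 2) \<and>
     (\<forall>c\<in>C. vbl c \<subseteq> V \<and> vbl c \<noteq> {})"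

definition atomic_constraints ::
  "('v \<Rightarrow> 'a set) \<Rightarrow> 'c set \<Rightarrow> ('c \<Rightarrow> 'v set) \<Rightarrow> ('c \<Rightarrow> ('v \<Rightarrow> 'a) \<Rightarrow> bool) \<Rightarrow> bool" where
  "atomic_constraints Q C vbl sat \<longleftrightarrow>
     (\<forall>c\<in>C. card {\<sigma> \<in> PiE (vbl c) Q. \<not> sat c \<sigma>} = 1)"

definition sat_assignments ::
  "'v set \<Rightarrow> ('v \<Rightarrow> 'a set) \<Rightarrow> 'c set \<Rightarrow> ('c \<Rightarrow> 'v set) \<Rightarrow> ('c \<Rightarrow> ('v \<Rightarrow> 'a) \<Rightarrow> bool)
     \<Rightarrow> ('v \<Rightarrow> 'a) set" where
  "sat_assignments V Q C vbl sat = {x \<in> PiE V Q. \<forall>c\<in>C. sat c (restrict x (vbl c))}"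

definition dep_degree :: "'c set \<Rightarrow> ('c \<Rightarrow> 'v set) \<Rightarrow> 'c \<Rightarrow> nat" where
  "dep_degree C vbl c = card {c' \<in> C. c' \<noteq> c \<and> vbl c \<inter> vbl c' \<noteq> {}}"

definition max_dep_degree :: "'c set \<Rightarrow> ('c \<Rightarrow> 'v set) \<Rightarrow> nat" where
  "max_dep_degree C vbl = Max (insert 0 (dep_degree C vbl ` C))"

text \<open>p = max over constraints of prod_{v in vbl c} 1/q_v (0 if there are no constraints).\<close>
definition max_viol_prob :: "('v \<Rightarrow> 'a set) \<Rightarrow> 'c set \<Rightarrow> ('c \<Rightarrow> 'v set) \<Rightarrow> real" where
  "max_viol_prob Q C vbl = Max (insert 0 ((\<lambda>c. \<Prod>v\<in>vbl c. 1 / real (card (Q v))) ` C))"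

definition projection_scheme ::
  "'v set \<Rightarrow> ('v \<Rightarrow> 'a set) \<Rightarrow> ('v \<Rightarrow> 'a \<Rightarrow> 'b) \<Rightarrow> ('v \<Rightarrow> 'b set) \<Rightarrow> bool" where
  "projection_scheme V Q h Sig \<longleftrightarrow> (\<forall>v\<in>V. finite (Sig v) \<and> h v \<in> Q v \<rightarrow> Sig v)"

text \<open>Entropy criterion with parameters (alpha, beta), written with log base 2.
  Note: log 0 is -infinity in the paper; we state the two log-inequalities in
  their exponentiated (product) form, which is exactly equivalent under that
  convention and avoids Isabelle's junk value log 0 = 0.\<close>
definition entropy_criterion ::
  "'v set \<Rightarrow> ('v \<Rightarrow> 'a set) \<Rightarrow> 'c set \<Rightarrow> ('c \<Rightarrow> 'v set) \<Rightarrow> ('v \<Rightarrow> 'a \<Rightarrow> 'b) \<Rightarrow> ('v \<Rightarrow> 'b set)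
     \<Rightarrow> real \<Rightarrow> real \<Rightarrow> bool" where
  "entropy_criterion V Q C vbl h Sig \<alpha> \<beta> \<longleftrightarrow>
     (\<forall>v\<in>V. \<forall>y\<in>Sig v.
        real_of_int \<lfloor>real (card (Q v)) / real (card (Sig v))\<rfloor> \<le> real (card {a \<in> Q v. h v a = y}) \<and>
        real (card {a \<in> Q v. h v a = y}) \<le> real_of_int \<lceil>real (card (Q v)) / real (card (Sig v))\<rceil>) \<and>
     (\<forall>c\<in>C.
        (\<Prod>v\<in>vbl c. real_of_int \<lceil>real (card (Q v)) / real (card (Sig v))\<rceil>)
           \<le> (\<Prod>v\<in>vbl c. real (card (Q v))) powr \<alpha> \<and>
        (\<Prod>v\<in>vbl c. real_of_int \<lfloor>real (card (Q v)) / real (card (Sig v))\<rfloor>)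
           \<ge> (\<Prod>v\<in>vbl c. real (card (Q v))) powr \<beta>)"

definition proj :: "'v set \<Rightarrow> ('v \<Rightarrow> 'a \<Rightarrow> 'b) \<Rightarrow> ('v \<Rightarrow> 'a) \<Rightarrow> ('v \<Rightarrow> 'b)" where
  "proj V h x = (\<lambda>v. if v \<in> V then h v (x v) else undefined)"

text \<open>nu: law of the projection of X ~ mu (mu uniform on satisfying assignments).\<close>
definition proj_dist ::
  "'v set \<Rightarrow> ('v \<Rightarrow> 'a set) \<Rightarrow> 'c set \<Rightarrow> ('c \<Rightarrow> 'v set) \<Rightarrow> ('c \<Rightarrow> ('v \<Rightarrow> 'a) \<Rightarrow> bool)
     \<Rightarrow> ('v \<Rightarrow> 'a \<Rightarrow> 'b) \<Rightarrow> ('v \<Rightarrow> 'b) \<Rightarrow> real" where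
  "proj_dist V Q C vbl sat h y =
     real (card {x \<in> sat_assignments V Q C vbl sat. proj V h x = y})
     / real (card (sat_assignments V Q C vbl sat))"

text \<open>State space of the Glauber dynamics on nu: the support of nu.\<close>
definition proj_support ::
  "'v set \<Rightarrow> ('v \<Rightarrow> 'a set) \<Rightarrow> 'c set \<Rightarrow> ('c \<Rightarrow> 'v set) \<Rightarrow> ('c \<Rightarrow> ('v \<Rightarrow> 'a) \<Rightarrow> bool)
     \<Rightarrow> ('v \<Rightarrow> 'a \<Rightarrow> 'b) \<Rightarrow> ('v \<Rightarrow> 'b) set" where
  "proj_support V Q C vbl sat h = proj V h ` sat_assignments V Q C vbl sat"

text \<open>Glauber dynamics for a distribution pi with (finite) support S on configurations
  over V: pick v in V uniformly, resample y_v from pi conditioned on y off v.\<close>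
definition glauber :: "'v set \<Rightarrow> ('v \<Rightarrow> 'b) set \<Rightarrow> (('v \<Rightarrow> 'b) \<Rightarrow> real)
     \<Rightarrow> ('v \<Rightarrow> 'b) \<Rightarrow> ('v \<Rightarrow> 'b) \<Rightarrow> real" where
  "glauber V S \<pi> y y' =
     (1 / real (card V)) *
     (\<Sum>v\<in>V. if y' \<in> S \<and> (\<forall>u. u \<noteq> v \<longrightarrow> y' u = y u)
              then \<pi> y' / (\<Sum>z\<in>{z \<in> S. \<forall>u. u \<noteq> v \<longrightarrow> z u = y u}. \<pi> z)
              else 0)"

definition prob_dist_on :: "'s set \<Rightarrow> ('s \<Rightarrow> real) \<Rightarrow> bool" where
  "prob_dist_on S \<pi> \<longleftrightarrow> (\<forall>x\<in>S. \<pi> x \<ge> 0) \<and> (\<Sum>x\<in>S. \<pi> x) = 1"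

definition stochastic_on :: "'s set \<Rightarrow> ('s \<Rightarrow> 's \<Rightarrow> real) \<Rightarrow> bool" where
  "stochastic_on S P \<longleftrightarrow> finite S \<and> (\<forall>x\<in>S. prob_dist_on S (P x))"

fun mpow :: "'s set \<Rightarrow> ('s \<Rightarrow> 's \<Rightarrow> real) \<Rightarrow> nat \<Rightarrow> 's \<Rightarrow> 's \<Rightarrow> real" where
  "mpow S P 0 x y = (if x = y then 1 else 0)"
| "mpow S P (Suc n) x y = (\<Sum>z\<in>S. P x z * mpow S P n z y)"

definition irreducible_on :: "'s set \<Rightarrow> ('s \<Rightarrow> 's \<Rightarrow> real) \<Rightarrow> bool" where
  "irreducible_on S P \<longleftrightarrow> (\<forall>x\<in>S. \<forall>y\<in>S. \<exists>n. mpow S P n x y > 0)"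

definition aperiodic_on :: "'s set \<Rightarrow> ('s \<Rightarrow> 's \<Rightarrow> real) \<Rightarrow> bool" where
  "aperiodic_on S P \<longleftrightarrow> (\<forall>x\<in>S. Gcd {n. n > 0 \<and> mpow S P n x x > 0} = 1)"

definition reversible_on :: "'s set \<Rightarrow> ('s \<Rightarrow> 's \<Rightarrow> real) \<Rightarrow> ('s \<Rightarrow> real) \<Rightarrow> bool" where
  "reversible_on S P \<pi> \<longleftrightarrow> (\<forall>x\<in>S. \<forall>y\<in>S. \<pi> x * P x y = \<pi> y * P y x)"

definition stationary_on :: "'s set \<Rightarrow> ('s \<Rightarrow> 's \<Rightarrow> real) \<Rightarrow> ('s \<Rightarrow> real) \<Rightarrow> bool" where
  "stationary_on S P \<pi> \<longleftrightarrow> prob_dist_on S \<pi> \<and> (\<forall>y\<in>S. (\<Sum>x\<in>S. \<pi> x * P x y) = \<pi> y)"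

definition unique_stationary_on :: "'s set \<Rightarrow> ('s \<Rightarrow> 's \<Rightarrow> real) \<Rightarrow> ('s \<Rightarrow> real) \<Rightarrow> bool" where
  "unique_stationary_on S P \<pi> \<longleftrightarrow>
     stationary_on S P \<pi> \<and> (\<forall>\<pi>'. stationary_on S P \<pi>' \<longrightarrow> (\<forall>x\<in>S. \<pi>' x = \<pi> x))"

end

theory Submission
  imports Defs
begin

text \<open>Fix a projected configuration \<open>y\<close>. Its preimages form a product space whose
  factors \<open>h\<^sub>v\<^sup>-\<^sup>1(y\<^sub>v)\<close> have at least \<open>\<lfloor>q\<^sub>v/s\<^sub>v\<rfloor>\<close> elements, so by the entropy criterion each
  constraint forbids one configuration out of at least \<open>(\<Prod>q\<^sub>v)\<^sup>\<beta> \<ge> 2eD\<close> on its scope. The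
  symmetric local lemma, in its counting form for such atomic bad events, then gives a
  satisfying assignment projecting to \<open>y\<close>. Hence \<open>\<nu>\<close> has full support on the product of the \<open>h\<^sub>v(Q\<^sub>v)\<close>, where
  the Glauber dynamics reaches every state by correcting one coordinate at a time and
  has positive holding probabilities; it is reversible by construction, and a reversible
  irreducible chain has a unique stationary distribution by the maximum principle for
  harmonic functions.\<close>

text \<open>Bad event \<open>c\<close> occurs when the variables of \<open>c\<close> take the configuration \<open>\<sigma> c\<close>;
  probabilities under the uniform measure on \<open>PiE V G\<close> are replaced by cardinalities.\<close>
locale atomic_bad_events =
  fixes V :: "'v set" and G :: "'v \<Rightarrow> 'a set" and C :: "'c set"
    and vbl :: "'c \<Rightarrow> 'v set" and \<sigma> :: "'c \<Rightarrow> 'v \<Rightarrow> 'a"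
  assumes finite_V: "finite V"
    and domains: "\<And>v. v \<in> V \<Longrightarrow> finite (G v) \<and> G v \<noteq> {}"
    and finite_C: "finite C"
    and vbl_subset: "\<And>c. c \<in> C \<Longrightarrow> vbl c \<subseteq> V"
begin

definition avoiding :: "'c set \<Rightarrow> ('v \<Rightarrow> 'a) set" where
  "avoiding T = {y \<in> PiE V G. \<forall>c\<in>T. restrict y (vbl c) \<noteq> \<sigma> c}"

definition hitting :: "'c \<Rightarrow> 'c set \<Rightarrow> ('v \<Rightarrow> 'a) set" where
  "hitting c T = {y \<in> avoiding T. restrict y (vbl c) = \<sigma> c}"

lemma finite_avoiding: "finite (avoiding T)"
proof -
  have "finite (PiE V G)" using finite_V domains by (auto intro: finite_PiE)
  then show ?thesis unfolding avoiding_def by simp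
qed

lemma finite_hitting: "finite (hitting c T)"
  using finite_avoiding by (simp add: hitting_def)

lemma avoiding_empty: "avoiding {} = PiE V G"
  by (simp add: avoiding_def)

lemma avoiding_antimono: "S \<subseteq> T \<Longrightarrow> avoiding T \<subseteq> avoiding S"
  by (auto simp: avoiding_def)

lemma card_avoiding_insert:
  "real (card (avoiding (insert c T))) = real (card (avoiding T)) - real (card (hitting c T))"
proof -
  have "avoiding (insert c T) = avoiding T - hitting c T"
    by (auto simp: avoiding_def hitting_def)
  moreover have "hitting c T \<subseteq> avoiding T"
    by (auto simp: hitting_def)
  ultimately show ?thesis
    using card_mono[OF finite_avoiding] by (simp add: card_Diff_subset of_nat_diff finite_hitting)
qed

lemma inj_on_override_hitting:
  "inj_on (\<lambda>(y, a). override_on y a (vbl c)) (hitting c T \<times> PiE (vbl c) G)"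
proof (rule inj_onI, clarify)
  fix y a y' a'
  assume y: "y \<in> hitting c T" "a \<in> PiE (vbl c) G" and y': "y' \<in> hitting c T" "a' \<in> PiE (vbl c) G"
    and eq: "override_on y a (vbl c) = override_on y' a' (vbl c)"
  have "y v = y' v" for v
  proof (cases "v \<in> vbl c")
    case True
    have "restrict y (vbl c) v = restrict y' (vbl c) v"
      using y(1) y'(1) by (simp add: hitting_def)
    then show ?thesis using True by simp
  next
    case False
    then show ?thesis using fun_cong[OF eq, of v] by (simp add: override_on_def)
  qed
  moreover have "a v = a' v" for v
  proof (cases "v \<in> vbl c")
    case True
    then show ?thesis using fun_cong[OF eq, of v] by (simp add: override_on_def)
  next
    case False
    then show ?thesis using PiE_arb[OF y(2)] PiE_arb[OF y'(2)] by simp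
  qed
  ultimately show "y = y' \<and> a = a'" by auto
qed

lemma override_hitting_in_avoiding:
  assumes c: "c \<in> C" and disjoint: "\<forall>c'\<in>T. vbl c \<inter> vbl c' = {}"
    and y: "y \<in> hitting c T" and a: "a \<in> PiE (vbl c) G"
  shows "override_on y a (vbl c) \<in> avoiding T"
proof -
  have "override_on y a (vbl c) \<in> PiE V G"
    using y a vbl_subset[OF c]
    by (auto simp: hitting_def avoiding_def override_on_def PiE_iff extensional_def)
  moreover have "restrict (override_on y a (vbl c)) (vbl c') = restrict y (vbl c')" if "c' \<in> T" for c'
    using disjoint that by (force simp: override_on_def restrict_def fun_eq_iff)
  ultimately show ?thesis
    using y by (auto simp: hitting_def avoiding_def)
qed

lemma card_hitting_mult_le:
  assumes c: "c \<in> C" and disjoint: "\<forall>c'\<in>T. vbl c \<inter> vbl c' = {}"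
  shows "card (hitting c T) * (\<Prod>v\<in>vbl c. card (G v)) \<le> card (avoiding T)"
proof -
  have "(\<lambda>(y, a). override_on y a (vbl c)) ` (hitting c T \<times> PiE (vbl c) G) \<subseteq> avoiding T"
    using override_hitting_in_avoiding[OF c disjoint] by auto
  then have "card (hitting c T \<times> PiE (vbl c) G) \<le> card (avoiding T)"
    using card_inj_on_le[OF inj_on_override_hitting] finite_avoiding by blast
  moreover have "finite (vbl c)"
    using vbl_subset[OF c] finite_V finite_subset by auto
  ultimately show ?thesis
    by (simp add: card_cartesian_product card_PiE)
qed

end

locale atomic_local_lemma = atomic_bad_events V G C vbl \<sigma>
  for V :: "'v set" and G :: "'v \<Rightarrow> 'a set" and C :: "'c set"
    and vbl :: "'c \<Rightarrow> 'v set" and \<sigma> :: "'c \<Rightarrow> 'v \<Rightarrow> 'a" +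
  fixes x :: real and D :: nat
  assumes x_pos: "0 < x" and x_less_1: "x < 1"
    and degree: "\<And>c. c \<in> C \<Longrightarrow> card {c' \<in> C. c' \<noteq> c \<and> vbl c \<inter> vbl c' \<noteq> {}} \<le> D"
    and weight: "\<And>c. c \<in> C \<Longrightarrow> 1 \<le> x * (1 - x) ^ D * (\<Prod>v\<in>vbl c. real (card (G v)))"
begin

lemma card_hitting_le_disjoint:
  assumes c: "c \<in> C" and disjoint: "\<forall>c'\<in>T. vbl c \<inter> vbl c' = {}"
  shows "real (card (hitting c T)) \<le> x * (1 - x) ^ D * real (card (avoiding T))"
proof -
  let ?w = "x * (1 - x) ^ D" and ?P = "\<Prod>v\<in>vbl c. real (card (G v))"
  have "real (card (hitting c T)) \<le> real (card (hitting c T)) * (?w * ?P)"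
    using weight[OF c] by (simp add: mult_le_cancel_left1)
  also have "\<dots> = ?w * (real (card (hitting c T)) * ?P)"
    by (simp add: algebra_simps)
  also have "\<dots> \<le> ?w * real (card (avoiding T))"
  proof (rule mult_left_mono)
    show "real (card (hitting c T)) * ?P \<le> real (card (avoiding T))"
      using card_hitting_mult_le[OF c disjoint] by (simp flip: of_nat_mult of_nat_prod)
  qed (use x_pos x_less_1 in simp)
  finally show ?thesis .
qed

lemma card_avoiding_union_ge:
  assumes "finite U" and "S \<inter> U = {}"
    and "\<And>W c. W \<subseteq> S \<union> U \<Longrightarrow> c \<in> U - W \<Longrightarrow>
      real (card (hitting c W)) \<le> x * real (card (avoiding W))"
  shows "(1 - x) ^ card U * real (card (avoiding S)) \<le> real (card (avoiding (S \<union> U)))"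
  using assms
proof (induction U rule: finite_induct)
  case empty
  then show ?case by simp
next
  case (insert u U)
  have "(1 - x) ^ card (insert u U) * real (card (avoiding S))
      = (1 - x) * ((1 - x) ^ card U * real (card (avoiding S)))"
    using insert.hyps by simp
  also have "\<dots> \<le> (1 - x) * real (card (avoiding (S \<union> U)))"
  proof (intro mult_left_mono)
    show "(1 - x) ^ card U * real (card (avoiding S)) \<le> real (card (avoiding (S \<union> U)))"
    proof (rule insert.IH)
      fix W c assume "W \<subseteq> S \<union> U" "c \<in> U - W"
      then show "real (card (hitting c W)) \<le> x * real (card (avoiding W))"
        using insert.prems(2) by blast
    qed (use insert.prems(1) in auto)
  qed (use x_less_1 in simp)
  also have "\<dots> \<le> real (card (avoiding (insert u (S \<union> U))))"
  proof -
    have "real (card (hitting u (S \<union> U))) \<le> x * real (card (avoiding (S \<union> U)))"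
      using insert.hyps insert.prems by blast
    then show ?thesis
      by (simp add: card_avoiding_insert algebra_simps)
  qed
  finally show ?case by simp
qed

text \<open>Split \<open>T\<close> into the neighbours \<open>T\<^sub>1\<close> of \<open>c\<close> and the rest \<open>T\<^sub>2\<close>;
  then \<open>c\<close> is independent of \<open>T\<^sub>2\<close>, and by induction adding the at most \<open>D\<close> events of
  \<open>T\<^sub>1\<close> loses at most a factor \<open>(1 - x) ^ D\<close>.\<close>
lemma card_hitting_le:
  "finite T \<Longrightarrow> T \<subseteq> C \<Longrightarrow> c \<in> C \<Longrightarrow> c \<notin> T \<Longrightarrow>
     real (card (hitting c T)) \<le> x * real (card (avoiding T))"
proof (induction T arbitrary: c rule: finite_psubset_induct)
  case (psubset T)
  define T1 where "T1 = {c' \<in> T. vbl c \<inter> vbl c' \<noteq> {}}"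
  define T2 where "T2 = T - T1"
  have T: "T2 \<union> T1 = T" "T2 \<inter> T1 = {}" "finite T1"
    using psubset.hyps by (auto simp: T1_def T2_def)
  have "card T1 \<le> card {c' \<in> C. c' \<noteq> c \<and> vbl c \<inter> vbl c' \<noteq> {}}"
    using psubset.prems finite_C by (intro card_mono) (auto simp: T1_def)
  then have card_T1: "card T1 \<le> D"
    using degree[OF psubset.prems(2)] by linarith
  have "hitting c T \<subseteq> hitting c T2"
    using avoiding_antimono[of T2 T] by (auto simp: hitting_def T2_def)
  then have "real (card (hitting c T)) \<le> real (card (hitting c T2))"
    by (simp add: card_mono finite_hitting)
  also have "\<dots> \<le> x * (1 - x) ^ D * real (card (avoiding T2))"
    using psubset.prems(2) by (rule card_hitting_le_disjoint) (auto simp: T1_def T2_def)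
  also have "\<dots> \<le> x * ((1 - x) ^ card T1 * real (card (avoiding T2)))"
    unfolding mult.assoc using x_pos x_less_1 card_T1
    by (intro mult_left_mono mult_right_mono power_decreasing) auto
  also have "\<dots> \<le> x * real (card (avoiding T))"
  proof -
    have "(1 - x) ^ card T1 * real (card (avoiding T2)) \<le> real (card (avoiding (T2 \<union> T1)))"
    proof (rule card_avoiding_union_ge[OF T(3,2)])
      fix W c' assume "W \<subseteq> T2 \<union> T1" "c' \<in> T1 - W"
      then show "real (card (hitting c' W)) \<le> x * real (card (avoiding W))"
        using psubset.IH[of W c'] psubset.prems(1) psubset.hyps T
        by (auto simp: T1_def finite_subset)
    qed
    then show ?thesis
      using x_pos T(1) by (simp add: mult_left_mono)
  qed
  finally show ?case .
qed

theorem avoiding_C_nonempty: "avoiding C \<noteq> {}"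
proof -
  have "(1 - x) ^ card C * real (card (avoiding {})) \<le> real (card (avoiding ({} \<union> C)))"
    using finite_C card_hitting_le finite_subset[OF _ finite_C]
    by (intro card_avoiding_union_ge) auto
  moreover have "avoiding {} \<noteq> {}"
    using domains by (simp add: avoiding_empty PiE_eq_empty_iff)
  then have "0 < (1 - x) ^ card C * real (card (avoiding {}))"
    using x_less_1 finite_avoiding by (simp add: card_gt_0_iff)
  ultimately show ?thesis
    by auto
qed

end

lemma one_over_2eD_le_lll_weight:
  fixes D :: nat
  assumes "D \<ge> 1"
  shows "1 / (2 * exp 1 * real D) \<le> 1 / (real D + 1) * (1 - 1 / (real D + 1)) ^ D"
proof -
  have D: "real D > 0" using assms by simp
  have "(1 + 1 / real D) ^ D \<le> exp (1 / real D) ^ D"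
    using D by (intro power_mono exp_ge_add_one_self) simp
  also have "\<dots> = exp 1"
    using D by (simp flip: exp_of_nat_mult)
  finally have "1 / exp 1 \<le> 1 / (1 + 1 / real D) ^ D"
    using D by (intro divide_left_mono) (auto simp: add_pos_nonneg)
  also have "\<dots> = (1 - 1 / (real D + 1)) ^ D"
    using D by (simp add: field_simps power_one_over)
  finally have power_ge: "1 / exp 1 \<le> (1 - 1 / (real D + 1)) ^ D" .
  have "(real D + 1) * exp 1 \<le> (2 * real D) * exp 1"
    using assms by (intro mult_right_mono) auto
  then have "1 / (2 * exp 1 * real D) \<le> 1 / (real D + 1) * (1 / exp 1)"
    using D by (simp add: frac_le mult.commute mult.left_commute)
  also have "\<dots> \<le> 1 / (real D + 1) * (1 - 1 / (real D + 1)) ^ D"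
    using power_ge by (intro mult_left_mono) auto
  finally show ?thesis .
qed

context atomic_bad_events
begin

text \<open>The bound \<open>2\<close> covers the case \<open>D = 0\<close>, where the bad events are independent.\<close>
theorem avoiding_C_nonempty_symmetric:
  assumes degree: "\<And>c. c \<in> C \<Longrightarrow> card {c' \<in> C. c' \<noteq> c \<and> vbl c \<inter> vbl c' \<noteq> {}} \<le> D"
    and weight: "\<And>c. c \<in> C \<Longrightarrow> max 2 (2 * exp 1 * real D) \<le> (\<Prod>v\<in>vbl c. real (card (G v)))"
  shows "avoiding C \<noteq> {}"
proof (cases "D = 0")
  case True
  interpret atomic_local_lemma V G C vbl \<sigma> "1 / 2" D
    using degree weight True by unfold_locales force+
  show ?thesis by (rule avoiding_C_nonempty)
next
  case False
  let ?x = "1 / (real D + 1)"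
  have "1 \<le> ?x * (1 - ?x) ^ D * (\<Prod>v\<in>vbl c. real (card (G v)))" if "c \<in> C" for c
  proof -
    have "1 = 1 / (2 * exp 1 * real D) * (2 * exp 1 * real D)"
      using False by simp
    also have "\<dots> \<le> ?x * (1 - ?x) ^ D * (\<Prod>v\<in>vbl c. real (card (G v)))"
      using False weight[OF that]
      by (intro mult_mono one_over_2eD_le_lll_weight) (auto intro: order_trans[OF exp_ge_zero])
    finally show ?thesis .
  qed
  then interpret atomic_local_lemma V G C vbl \<sigma> ?x D
    using degree False by unfold_locales (auto simp: field_simps)
  show ?thesis by (rule avoiding_C_nonempty)
qed

end

lemma mpow_nonneg:
  assumes "stochastic_on S P" and "x \<in> S"
  shows "0 \<le> mpow S P n x y"
  using assms(2)
proof (induction n arbitrary: x)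
  case (Suc n)
  then show ?case
    using assms(1) by (auto simp: stochastic_on_def prob_dist_on_def intro!: sum_nonneg)
qed simp

lemma mpow_Suc_ge:
  assumes "stochastic_on S P" and "x \<in> S" and "z \<in> S"
  shows "P x z * mpow S P n z y \<le> mpow S P (Suc n) x y"
proof -
  have "\<forall>w\<in>S. 0 \<le> P x w * mpow S P n w y"
    using assms mpow_nonneg[OF assms(1)] by (auto simp: stochastic_on_def prob_dist_on_def)
  then show ?thesis
    using assms(1,3) by (auto simp: stochastic_on_def intro: member_le_sum)
qed

lemma mpow_pos_imp_step_pos:
  assumes "stochastic_on S P" and "x \<in> S" and "0 < mpow S P (Suc n) x y"
  obtains z where "z \<in> S" "0 < P x z" "0 < mpow S P n z y"
proof -
  have "0 < (\<Sum>z\<in>S. P x z * mpow S P n z y)"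
    using assms(3) by simp
  then obtain z where z: "z \<in> S" "0 < P x z * mpow S P n z y"
    by (meson not_le sum_nonpos)
  moreover have "0 \<le> P x z" "0 \<le> mpow S P n z y"
    using assms(1,2) z(1) mpow_nonneg[OF assms(1)] by (auto simp: stochastic_on_def prob_dist_on_def)
  ultimately show ?thesis
    using that by (simp add: zero_less_mult_iff)
qed

lemma harmonic_max_step:
  assumes P: "stochastic_on S P"
    and harmonic: "\<And>y. y \<in> S \<Longrightarrow> (\<Sum>x\<in>S. P y x * f x) = f y"
    and max: "\<And>z. z \<in> S \<Longrightarrow> f z \<le> f y0"
    and y: "y \<in> S" "f y = f y0" and z: "z \<in> S" "0 < P y z"
  shows "f z = f y0"
proof -
  have "(\<Sum>x\<in>S. P y x * (f y0 - f x)) = f y0 * (\<Sum>x\<in>S. P y x) - (\<Sum>x\<in>S. P y x * f x)"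
    by (simp add: algebra_simps sum_subtractf sum_distrib_left)
  also have "\<dots> = 0"
    using P y harmonic[OF y(1)] by (simp add: stochastic_on_def prob_dist_on_def)
  finally have sum_0: "(\<Sum>x\<in>S. P y x * (f y0 - f x)) = 0" .
  have "\<forall>x\<in>S. 0 \<le> P y x * (f y0 - f x)"
    using P y(1) max by (auto simp: stochastic_on_def prob_dist_on_def)
  then have "P y z * (f y0 - f z) = 0"
    using sum_nonneg_eq_0_iff[of S "\<lambda>x. P y x * (f y0 - f x)"] sum_0 z(1) P
    by (simp add: stochastic_on_def)
  then show ?thesis
    using z(2) by simp
qed

text \<open>Maximum principle: the mean-value property forces the maximum to propagate along
  every positive step, and irreducibility lets it reach every state.\<close>
lemma harmonic_max_imp_const:
  assumes P: "stochastic_on S P" and irr: "irreducible_on S P"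
    and harmonic: "\<And>y. y \<in> S \<Longrightarrow> (\<Sum>x\<in>S. P y x * f x) = f y"
    and y0: "y0 \<in> S" and max: "\<And>z. z \<in> S \<Longrightarrow> f z \<le> f y0"
    and z: "z \<in> S"
  shows "f z = f y0"
proof -
  have "f w = f y0" if "y \<in> S" "f y = f y0" "0 < mpow S P n y w" for n y w
    using that
  proof (induction n arbitrary: y)
    case 0
    then show ?case by (simp split: if_splits)
  next
    case (Suc n)
    obtain z where "z \<in> S" "0 < P y z" "0 < mpow S P n z w"
      using mpow_pos_imp_step_pos[OF P Suc.prems(1,3)] .
    then show ?case
      using Suc.IH harmonic_max_step[OF P harmonic max] Suc.prems(1,2) by blast
  qed
  moreover obtain n where "0 < mpow S P n y0 z"
    using irr y0 z by (auto simp: irreducible_on_def)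
  ultimately show ?thesis
    using y0 by blast
qed

lemma reversible_imp_stationary:
  assumes "stochastic_on S P" and "prob_dist_on S \<pi>" and "reversible_on S P \<pi>"
  shows "stationary_on S P \<pi>"
  unfolding stationary_on_def
proof (intro conjI assms(2) ballI)
  fix y assume y: "y \<in> S"
  have "(\<Sum>x\<in>S. \<pi> x * P x y) = (\<Sum>x\<in>S. \<pi> y * P y x)"
    using assms(3) y by (intro sum.cong) (auto simp: reversible_on_def)
  also have "\<dots> = \<pi> y"
    using assms(1) y by (simp add: stochastic_on_def prob_dist_on_def flip: sum_distrib_left)
  finally show "(\<Sum>x\<in>S. \<pi> x * P x y) = \<pi> y" .
qed

lemma stationary_ratio_harmonic:
  assumes rev: "reversible_on S P \<pi>" and pos: "\<And>y. y \<in> S \<Longrightarrow> 0 < \<pi> y"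
    and st: "stationary_on S P \<pi>'" and y: "y \<in> S"
  shows "(\<Sum>x\<in>S. P y x * (\<pi>' x / \<pi> x)) = \<pi>' y / \<pi> y"
proof -
  have "\<pi> y * (\<Sum>x\<in>S. P y x * (\<pi>' x / \<pi> x)) = (\<Sum>x\<in>S. \<pi>' x * P x y)"
    unfolding sum_distrib_left
  proof (rule sum.cong)
    fix x assume x: "x \<in> S"
    have "\<pi> y * (P y x * (\<pi>' x / \<pi> x)) = (\<pi> y * P y x) * (\<pi>' x / \<pi> x)"
      by (simp only: mult.assoc)
    also have "\<dots> = (\<pi> x * P x y) * (\<pi>' x / \<pi> x)"
      using rev x y by (simp add: reversible_on_def)
    also have "\<dots> = \<pi>' x * P x y"
      using pos[OF x] by simp
    finally show "\<pi> y * (P y x * (\<pi>' x / \<pi> x)) = \<pi>' x * P x y" .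
  qed simp
  also have "\<dots> = \<pi>' y"
    using st y by (simp add: stationary_on_def)
  finally show ?thesis
    using pos[OF y] by (simp add: nonzero_eq_divide_eq mult.commute)
qed

text \<open>If \<open>\<pi>'\<close> is stationary, reversibility makes \<open>\<pi>' / \<pi>\<close> harmonic, hence constant.\<close>
theorem reversible_irreducible_imp_unique_stationary:
  assumes P: "stochastic_on S P" and irr: "irreducible_on S P"
    and \<pi>: "prob_dist_on S \<pi>" and pos: "\<And>y. y \<in> S \<Longrightarrow> 0 < \<pi> y"
    and rev: "reversible_on S P \<pi>"
  shows "unique_stationary_on S P \<pi>"
  unfolding unique_stationary_on_def
proof (intro conjI reversible_imp_stationary[OF P \<pi> rev] allI impI ballI)
  fix \<pi>' z assume st: "stationary_on S P \<pi>'" and z: "z \<in> S"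
  define f where "f x = \<pi>' x / \<pi> x" for x
  have harmonic: "(\<Sum>x\<in>S. P y x * f x) = f y" if "y \<in> S" for y
    unfolding f_def using stationary_ratio_harmonic[OF rev pos st that] .
  have finite: "finite S" and "S \<noteq> {}"
    using P \<pi> by (auto simp: stochastic_on_def prob_dist_on_def)
  then have "Max (f ` S) \<in> f ` S"
    by (intro Max_in) auto
  then obtain y0 where y0: "y0 \<in> S" "Max (f ` S) = f y0"
    by blast
  have max: "f x \<le> f y0" if "x \<in> S" for x
    unfolding y0(2)[symmetric] by (rule Max_ge) (use finite that in auto)
  have const: "\<pi>' x = f y0 * \<pi> x" if "x \<in> S" for x
  proof -
    have "\<pi>' x = f x * \<pi> x"
      using pos[OF that] by (simp add: f_def)
    then show ?thesis
      using harmonic_max_imp_const[OF P irr harmonic y0(1) max that] by simp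
  qed
  have "1 = (\<Sum>x\<in>S. \<pi>' x)"
    using st by (simp add: stationary_on_def prob_dist_on_def)
  also have "\<dots> = f y0"
    using \<pi> const by (simp add: prob_dist_on_def flip: sum_distrib_left)
  finally show "\<pi>' z = \<pi> z"
    using const[OF z] by simp
qed

locale glauber_chain =
  fixes V :: "'v set" and S :: "('v \<Rightarrow> 'b) set" and \<pi> :: "('v \<Rightarrow> 'b) \<Rightarrow> real"
  assumes finite_V: "finite V" and V_nonempty: "V \<noteq> {}" and finite_S: "finite S"
    and pos: "\<And>y. y \<in> S \<Longrightarrow> 0 < \<pi> y"
begin

definition agree_off :: "'v \<Rightarrow> ('v \<Rightarrow> 'b) \<Rightarrow> ('v \<Rightarrow> 'b) set" where
  "agree_off v y = {z \<in> S. \<forall>u. u \<noteq> v \<longrightarrow> z u = y u}"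

lemma glauber_eq:
  "glauber V S \<pi> y y' = 1 / real (card V) *
     (\<Sum>v\<in>V. if y' \<in> agree_off v y then \<pi> y' / sum \<pi> (agree_off v y) else 0)"
  unfolding glauber_def agree_off_def by simp

lemma agree_off_sym: "y' \<in> agree_off v y \<Longrightarrow> y \<in> S \<Longrightarrow> agree_off v y' = agree_off v y \<and> y \<in> agree_off v y'"
  by (auto simp: agree_off_def)

lemma agree_off_mass_pos: "y \<in> S \<Longrightarrow> 0 < sum \<pi> (agree_off v y)"
  using finite_S pos by (intro sum_pos2[of _ y]) (auto simp: agree_off_def less_imp_le)

lemma glauber_nonneg: "0 \<le> glauber V S \<pi> y y'"
proof -
  have "0 \<le> \<pi> y' / sum \<pi> (agree_off v y)" if "y' \<in> agree_off v y" for v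
    using that pos by (intro divide_nonneg_nonneg sum_nonneg) (auto simp: agree_off_def less_imp_le)
  then show ?thesis
    unfolding glauber_eq by (intro mult_nonneg_nonneg sum_nonneg) auto
qed

lemma glauber_row_sum:
  assumes "y \<in> S"
  shows "(\<Sum>y'\<in>S. glauber V S \<pi> y y') = 1"
proof -
  have resample_sum: "(\<Sum>y'\<in>S. if y' \<in> agree_off v y then \<pi> y' / sum \<pi> (agree_off v y) else 0) = 1" for v
  proof -
    have "agree_off v y \<subseteq> S"
      by (auto simp: agree_off_def)
    then have "(\<Sum>y'\<in>S. if y' \<in> agree_off v y then \<pi> y' / sum \<pi> (agree_off v y) else 0)
        = (\<Sum>y'\<in>agree_off v y. \<pi> y') / sum \<pi> (agree_off v y)"
      using finite_S by (simp add: sum.If_cases Int_absorb1 flip: sum_divide_distrib)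
    then show ?thesis
      using agree_off_mass_pos[OF assms, of v] by simp
  qed
  have "(\<Sum>y'\<in>S. glauber V S \<pi> y y')
      = 1 / real (card V) * (\<Sum>v\<in>V. \<Sum>y'\<in>S. if y' \<in> agree_off v y then \<pi> y' / sum \<pi> (agree_off v y) else 0)"
    unfolding glauber_eq by (simp add: sum_distrib_left sum.swap[of _ S])
  then show ?thesis
    using finite_V V_nonempty by (simp add: resample_sum)
qed

lemma stochastic_on_glauber: "stochastic_on S (glauber V S \<pi>)"
  using finite_S glauber_nonneg glauber_row_sum by (simp add: stochastic_on_def prob_dist_on_def)

lemma reversible_on_glauber: "reversible_on S (glauber V S \<pi>) \<pi>"
  unfolding reversible_on_def
proof (intro ballI)
  fix y y' assume y: "y \<in> S" and y': "y' \<in> S"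
  have "\<pi> y * (if y' \<in> agree_off v y then \<pi> y' / sum \<pi> (agree_off v y) else 0)
      = \<pi> y' * (if y \<in> agree_off v y' then \<pi> y / sum \<pi> (agree_off v y') else 0)" for v
  proof (cases "y' \<in> agree_off v y")
    case True
    then have "agree_off v y' = agree_off v y" "y \<in> agree_off v y'"
      using agree_off_sym[OF _ y] by blast+
    then show ?thesis
      using True by (simp add: algebra_simps)
  next
    case False
    then have "y \<notin> agree_off v y'"
      using agree_off_sym[OF _ y'] by blast
    then show ?thesis
      using False by simp
  qed
  then show "\<pi> y * glauber V S \<pi> y y' = \<pi> y' * glauber V S \<pi> y' y"
    unfolding glauber_eq by (simp add: sum_distrib_left mult.left_commute[of "\<pi> _"])
qed

lemma glauber_single_site_pos:
  assumes "y \<in> S" and "y' \<in> S" and "v \<in> V" and "\<forall>u. u \<noteq> v \<longrightarrow> y' u = y u"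
  shows "0 < glauber V S \<pi> y y'"
proof -
  have "0 < (\<Sum>w\<in>V. if y' \<in> agree_off w y then \<pi> y' / sum \<pi> (agree_off w y) else 0)"
    using assms finite_V pos agree_off_mass_pos
    by (intro sum_pos2[of _ v]) (auto simp: agree_off_def intro!: divide_nonneg_nonneg sum_nonneg less_imp_le)
  then show ?thesis
    unfolding glauber_eq using finite_V V_nonempty by (simp add: card_gt_0_iff)
qed

lemma aperiodic_on_glauber: "aperiodic_on S (glauber V S \<pi>)"
  unfolding aperiodic_on_def
proof
  fix y assume y: "y \<in> S"
  obtain v where "v \<in> V"
    using V_nonempty by auto
  then have "0 < glauber V S \<pi> y y"
    using glauber_single_site_pos[OF y y] by simp
  then have "0 < mpow S (glauber V S \<pi>) 1 y y"
    using finite_S y by (simp add: if_distrib sum.If_cases)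
  then have "Gcd {n. 0 < n \<and> 0 < mpow S (glauber V S \<pi>) n y y} dvd 1"
    by (intro Gcd_dvd) simp
  then show "Gcd {n. 0 < n \<and> 0 < mpow S (glauber V S \<pi>) n y y} = 1"
    by simp
qed

lemma irreducible_on_glauber_PiE:
  assumes S: "S = PiE V Y"
  shows "irreducible_on S (glauber V S \<pi>)"
proof -
  have "\<exists>k. 0 < mpow S (glauber V S \<pi>) k y y'"
    if "y \<in> S" "y' \<in> S" "card {v \<in> V. y v \<noteq> y' v} = n" for n y y'
    using that
  proof (induction n arbitrary: y)
    case 0
    then have "y = y'"
      using finite_V S by (intro PiE_ext[of y V Y y']) auto
    then show ?case
      by (intro exI[of _ 0]) simp
  next
    case (Suc n)
    then obtain v where v: "v \<in> V" "y v \<noteq> y' v"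
      by (metis (mono_tags, lifting) card.empty empty_Collect_eq nat.distinct(1))
    define z where "z = y(v := y' v)"
    have z: "z \<in> S"
      using Suc.prems(1,2) v(1) by (auto simp: S z_def PiE_iff extensional_def)
    have "{u \<in> V. z u \<noteq> y' u} = {u \<in> V. y u \<noteq> y' u} - {v}"
      by (auto simp: z_def)
    then have "card {u \<in> V. z u \<noteq> y' u} = n"
      using Suc.prems(3) v finite_V by simp
    then obtain k where k: "0 < mpow S (glauber V S \<pi>) k z y'"
      using Suc.IH z Suc.prems(2) by blast
    have "0 < glauber V S \<pi> y z * mpow S (glauber V S \<pi>) k z y'"
      using glauber_single_site_pos[OF Suc.prems(1) z v(1)] k by (simp add: z_def)
    also have "\<dots> \<le> mpow S (glauber V S \<pi>) (Suc k) y y'"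
      by (rule mpow_Suc_ge[OF stochastic_on_glauber Suc.prems(1) z])
    finally show ?case by blast
  qed
  then show ?thesis
    unfolding irreducible_on_def by blast
qed

end

lemma atomic_constraints_forbidden:
  assumes "atomic_constraints Q C vbl sat"
  obtains \<sigma> where "\<And>c. c \<in> C \<Longrightarrow> {s \<in> PiE (vbl c) Q. \<not> sat c s} = {\<sigma> c}"
proof -
  have "\<forall>c\<in>C. \<exists>s. {s' \<in> PiE (vbl c) Q. \<not> sat c s'} = {s}"
    using assms by (simp add: atomic_constraints_def card_1_singleton_iff)
  from bchoice[OF this] obtain \<sigma> where "\<forall>c\<in>C. {s \<in> PiE (vbl c) Q. \<not> sat c s} = {\<sigma> c}"
    by blast
  then show ?thesis
    using that by blast
qed

lemma finite_sat_assignments: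
  assumes "csp_formula V Q C vbl"
  shows "finite (sat_assignments V Q C vbl sat)"
proof -
  have "finite (PiE V Q)"
    using assms by (auto simp: csp_formula_def intro: finite_PiE)
  then show ?thesis
    unfolding sat_assignments_def by simp
qed

lemma proj_in_PiE:
  assumes "x \<in> PiE V Q"
  shows "proj V h x \<in> PiE V (\<lambda>v. h v ` Q v)"
proof (rule PiE_I)
  fix v assume "v \<in> V"
  then show "proj V h x v \<in> h v ` Q v"
    using PiE_mem[OF assms] by (simp add: proj_def)
qed (simp add: proj_def)

lemma proj_support_subset: "proj_support V Q C vbl sat h \<subseteq> PiE V (\<lambda>v. h v ` Q v)"
  unfolding proj_support_def
  by (rule image_subsetI, rule proj_in_PiE) (simp add: sat_assignments_def)

lemma proj_dist_pos:
  assumes "finite (sat_assignments V Q C vbl sat)" and "y \<in> proj_support V Q C vbl sat h"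
  shows "0 < proj_dist V Q C vbl sat h y"
proof -
  have "{x \<in> sat_assignments V Q C vbl sat. proj V h x = y} \<noteq> {}"
    using assms(2) by (auto simp: proj_support_def)
  moreover have "sat_assignments V Q C vbl sat \<noteq> {}"
    using assms(2) by (auto simp: proj_support_def)
  ultimately show ?thesis
    using assms(1) by (simp add: proj_dist_def card_gt_0_iff)
qed

lemma prob_dist_on_proj_dist:
  assumes "finite (sat_assignments V Q C vbl sat)" and "sat_assignments V Q C vbl sat \<noteq> {}"
  shows "prob_dist_on (proj_support V Q C vbl sat h) (proj_dist V Q C vbl sat h)"
proof -
  let ?X = "sat_assignments V Q C vbl sat" and ?Y = "proj_support V Q C vbl sat h"
  have "(\<Sum>y\<in>?Y. real (card {x \<in> ?X. proj V h x = y})) = (\<Sum>x\<in>?X. 1)"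
    using sum.group[of ?X ?Y "proj V h" "\<lambda>_. 1 :: real"] assms(1)
    by (simp add: proj_support_def)
  then have "(\<Sum>y\<in>?Y. proj_dist V Q C vbl sat h y) = 1"
    using assms by (simp add: proj_dist_def flip: sum_divide_distrib)
  then show ?thesis
    unfolding prob_dist_on_def by (simp add: proj_dist_def)
qed

lemma card_fibre_ge_floor:
  assumes "projection_scheme V Q h Sig" and "entropy_criterion V Q C vbl h Sig \<alpha> \<beta>"
    and "v \<in> V" and "b \<in> h v ` Q v"
  shows "real_of_int \<lfloor>real (card (Q v)) / real (card (Sig v))\<rfloor> \<le> real (card {a \<in> Q v. h v a = b})"
proof -
  have "b \<in> Sig v"
    using assms(1,3,4) by (auto simp: projection_scheme_def)
  then show ?thesis
    using assms(2,3) by (simp add: entropy_criterion_def)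
qed

lemma prod_card_fibres_ge:
  assumes "csp_formula V Q C vbl" and "projection_scheme V Q h Sig"
    and "entropy_criterion V Q C vbl h Sig \<alpha> \<beta>" and c: "c \<in> C"
    and y: "y \<in> PiE V (\<lambda>v. h v ` Q v)"
  shows "(\<Prod>v\<in>vbl c. real (card (Q v))) powr \<beta> \<le> (\<Prod>v\<in>vbl c. real (card {a \<in> Q v. h v a = y v}))"
proof -
  have "(\<Prod>v\<in>vbl c. real (card (Q v))) powr \<beta>
      \<le> (\<Prod>v\<in>vbl c. real_of_int \<lfloor>real (card (Q v)) / real (card (Sig v))\<rfloor>)"
    using assms(3) c by (simp add: entropy_criterion_def)
  also have "\<dots> \<le> (\<Prod>v\<in>vbl c. real (card {a \<in> Q v. h v a = y v}))"
  proof (rule prod_mono)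
    fix v assume "v \<in> vbl c"
    then have "v \<in> V"
      using assms(1) c by (auto simp: csp_formula_def)
    then show "0 \<le> real_of_int \<lfloor>real (card (Q v)) / real (card (Sig v))\<rfloor> \<and>
        real_of_int \<lfloor>real (card (Q v)) / real (card (Sig v))\<rfloor> \<le> real (card {a \<in> Q v. h v a = y v})"
      using card_fibre_ge_floor[OF assms(2,3)] y by (auto simp: PiE_iff)
  qed
  finally show ?thesis .
qed

lemma prod_card_domains_ge_2:
  assumes "csp_formula V Q C vbl" and c: "c \<in> C"
  shows "2 \<le> (\<Prod>v\<in>vbl c. real (card (Q v)))"
proof -
  have dom: "2 \<le> card (Q v)" if "v \<in> vbl c" for v
    using assms that unfolding csp_formula_def by blast
  have "vbl c \<noteq> {}"
    using assms by (simp add: csp_formula_def)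
  then obtain v0 where v0: "v0 \<in> vbl c"
    by blast
  have fin: "finite (vbl c)"
    using assms by (auto simp: csp_formula_def finite_subset)
  have "2 * 1 \<le> real (card (Q v0)) * (\<Prod>v\<in>vbl c - {v0}. real (card (Q v)))"
    using dom v0 by (intro mult_mono prod_ge_1) (auto intro: order_trans[OF _ dom])
  then show ?thesis
    by (simp add: prod.remove[OF fin v0])
qed

lemma dep_degree_le_max:
  assumes "csp_formula V Q C vbl" and "c \<in> C"
  shows "card {c' \<in> C. c' \<noteq> c \<and> vbl c \<inter> vbl c' \<noteq> {}} \<le> max_dep_degree C vbl"
  using assms by (auto simp: csp_formula_def max_dep_degree_def dep_degree_def intro: Max_ge)

lemma log_condition_imp_degree_le_powr:
  assumes "csp_formula V Q C vbl" and c: "c \<in> C" and "0 < \<beta>"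
    and hyp: "log 2 (1 / max_viol_prob Q C vbl)
           \<ge> (1 / \<beta>) * log 2 (2 * exp 1 * real (max_dep_degree C vbl))"
  shows "2 * exp 1 * real (max_dep_degree C vbl) \<le> (\<Prod>v\<in>vbl c. real (card (Q v))) powr \<beta>"
proof (cases "max_dep_degree C vbl = 0")
  case False
  let ?q = "\<Prod>v\<in>vbl c. real (card (Q v))" and ?d = "2 * exp 1 * real (max_dep_degree C vbl)"
  have q: "2 \<le> ?q"
    using prod_card_domains_ge_2[OF assms(1) c] .
  have "1 / ?q \<le> max_viol_prob Q C vbl"
    using assms(1) c unfolding max_viol_prob_def csp_formula_def
    by (intro Max_ge) (auto simp: prod_dividef)
  moreover have "0 < 1 / ?q"
    using q by simp
  ultimately have p: "0 < max_viol_prob Q C vbl"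
    by linarith
  then have "1 / max_viol_prob Q C vbl \<le> ?q"
    using q \<open>1 / ?q \<le> max_viol_prob Q C vbl\<close> by (simp add: field_simps)
  then have "log 2 (1 / max_viol_prob Q C vbl) \<le> log 2 ?q"
    using p by (intro log_mono) auto
  then have "(1 / \<beta>) * log 2 ?d \<le> log 2 ?q"
    using hyp by linarith
  then have "log 2 ?d \<le> \<beta> * log 2 ?q"
    using assms(3) by (simp add: field_simps)
  also have "\<dots> = log 2 (?q powr \<beta>)"
    using q by (simp add: log_powr)
  finally show ?thesis
    using False q by simp
qed simp

lemma prod_card_fibres_ge_max:
  assumes csp: "csp_formula V Q C vbl" and ps: "projection_scheme V Q h Sig"
    and ec: "entropy_criterion V Q C vbl h Sig \<alpha> \<beta>" and "0 < \<beta>"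
    and hyp: "log 2 (1 / max_viol_prob Q C vbl)
           \<ge> (1 / \<beta>) * log 2 (2 * exp 1 * real (max_dep_degree C vbl))"
    and c: "c \<in> C" and y: "y \<in> PiE V (\<lambda>v. h v ` Q v)"
  shows "max 2 (2 * exp 1 * real (max_dep_degree C vbl))
    \<le> (\<Prod>v\<in>vbl c. real (card {a \<in> Q v. h v a = y v}))"
proof -
  let ?G = "\<Prod>v\<in>vbl c. card {a \<in> Q v. h v a = y v}"
  have fibres: "(\<Prod>v\<in>vbl c. real (card (Q v))) powr \<beta> \<le> real ?G"
    using prod_card_fibres_ge[OF csp ps ec c y] by simp
  have "1 < (\<Prod>v\<in>vbl c. real (card (Q v))) powr \<beta>"
    using prod_card_domains_ge_2[OF csp c] \<open>0 < \<beta>\<close> by (intro gr_one_powr) auto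
  then have "1 < real ?G"
    using fibres by linarith
  then have "2 \<le> ?G"
    by linarith
  then have "2 \<le> real ?G"
    by linarith
  then show ?thesis
    using fibres log_condition_imp_degree_le_powr[OF csp c \<open>0 < \<beta>\<close> hyp] by simp
qed

theorem proj_support_eq_PiE:
  assumes csp: "csp_formula V Q C vbl" and atomic: "atomic_constraints Q C vbl sat"
    and ps: "projection_scheme V Q h Sig" and ec: "entropy_criterion V Q C vbl h Sig \<alpha> \<beta>"
    and "0 < \<beta>"
    and hyp: "log 2 (1 / max_viol_prob Q C vbl)
           \<ge> (1 / \<beta>) * log 2 (2 * exp 1 * real (max_dep_degree C vbl))"
  shows "proj_support V Q C vbl sat h = PiE V (\<lambda>v. h v ` Q v)"
proof (intro equalityI proj_support_subset subsetI)
  fix y assume y: "y \<in> PiE V (\<lambda>v. h v ` Q v)"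
  define G where "G v = {a \<in> Q v. h v a = y v}" for v
  obtain \<sigma> where \<sigma>: "\<And>c. c \<in> C \<Longrightarrow> {s \<in> PiE (vbl c) Q. \<not> sat c s} = {\<sigma> c}"
    using atomic_constraints_forbidden[OF atomic] by blast
  interpret atomic_bad_events V G C vbl \<sigma>
  proof
    fix v assume "v \<in> V"
    then show "finite (G v) \<and> G v \<noteq> {}"
      using csp y by (force simp: csp_formula_def G_def PiE_iff)
  qed (use csp in \<open>auto simp: csp_formula_def\<close>)
  have weight: "max 2 (2 * exp 1 * real (max_dep_degree C vbl)) \<le> (\<Prod>v\<in>vbl c. real (card (G v)))"
    if "c \<in> C" for c
    unfolding G_def using prod_card_fibres_ge_max[OF csp ps ec \<open>0 < \<beta>\<close> hyp that y] .
  have "avoiding C \<noteq> {}"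
    using avoiding_C_nonempty_symmetric[OF dep_degree_le_max[OF csp] weight] .
  then obtain z where z: "z \<in> PiE V G" "\<forall>c\<in>C. restrict z (vbl c) \<noteq> \<sigma> c"
    by (auto simp: avoiding_def)
  have zQ: "z \<in> PiE V Q"
    using z(1) by (auto simp: G_def PiE_iff)
  have "sat c (restrict z (vbl c))" if "c \<in> C" for c
  proof -
    have "restrict z (vbl c) \<in> PiE (vbl c) Q"
      using zQ csp that by (auto simp: csp_formula_def restrict_PiE_iff)
    then show ?thesis
      using \<sigma>[OF that] z(2) that by blast
  qed
  then have "z \<in> sat_assignments V Q C vbl sat"
    using zQ by (simp add: sat_assignments_def)
  moreover have "proj V h z = y"
    using z(1) y by (auto simp: proj_def G_def PiE_iff extensional_def)
  ultimately show "y \<in> proj_support V Q C vbl sat h"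
    unfolding proj_support_def by blast
qed

theorem proposition8p1:
  fixes V :: "'v set" and Q :: "'v \<Rightarrow> 'a set" and C :: "'c set"
    and vbl :: "'c \<Rightarrow> 'v set" and sat :: "'c \<Rightarrow> ('v \<Rightarrow> 'a) \<Rightarrow> bool"
    and h :: "'v \<Rightarrow> 'a \<Rightarrow> 'b" and Sig :: "'v \<Rightarrow> 'b set"
    and \<alpha> \<beta> :: real
  assumes "csp_formula V Q C vbl"
    and "atomic_constraints Q C vbl sat"
    and "projection_scheme V Q h Sig"
    and "entropy_criterion V Q C vbl h Sig \<alpha> \<beta>"
    and "0 < \<beta>" and "\<beta> < \<alpha>" and "\<alpha> < 1"
    and "log 2 (1 / max_viol_prob Q C vbl)
           \<ge> (1 / \<beta>) * log 2 (2 * exp 1 * real (max_dep_degree C vbl))"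
  shows "let S = proj_support V Q C vbl sat h;
             \<nu> = proj_dist V Q C vbl sat h;
             P = glauber V S \<nu>
         in stochastic_on S P \<and> irreducible_on S P \<and> aperiodic_on S P \<and>
            reversible_on S P \<nu> \<and> unique_stationary_on S P \<nu>"
proof -
  let ?X = "sat_assignments V Q C vbl sat"
  let ?S = "proj_support V Q C vbl sat h" and ?\<nu> = "proj_dist V Q C vbl sat h"
  have S: "?S = PiE V (\<lambda>v. h v ` Q v)"
    using proj_support_eq_PiE assms(1-5,8) .
  have X: "finite ?X"
    using finite_sat_assignments[OF assms(1)] .
  have "?S \<noteq> {}"
    using assms(1) by (auto simp: S PiE_eq_empty_iff csp_formula_def)
  then have "?X \<noteq> {}"
    by (simp add: proj_support_def)
  interpret glauber_chain V ?S ?\<nu>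
    using assms(1) X proj_dist_pos[OF X] by unfold_locales (auto simp: csp_formula_def proj_support_def)
  have "unique_stationary_on ?S (glauber V ?S ?\<nu>) ?\<nu>"
    using reversible_irreducible_imp_unique_stationary[OF stochastic_on_glauber
        irreducible_on_glauber_PiE[OF S] prob_dist_on_proj_dist[OF X \<open>?X \<noteq> {}\<close>]
        proj_dist_pos[OF X] reversible_on_glauber] .
  then show ?thesis
    using stochastic_on_glauber irreducible_on_glauber_PiE[OF S] aperiodic_on_glauber
      reversible_on_glauber by (simp add: Let_def)
qed

end
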